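(* Let $I$ be an index set and $p_r,q_r\in\mathbb C\setminus\{0\}$ for $r\in I$. There exists a homeomorphism $f\colon\mathbb C\to\mathbb C$ with $f(p_rw)=q_rf(w)$ for all $w\in\mathbb C$ and all $r\in I$ if and only if there exists a complex number $\alpha$ with $\operatorname{Re}\alpha>-1$ such that either $q_r=p_r|p_r|^{\alpha}$ for all $r\in I$, or $q_r=\overline{p_r}\,|p_r|^{\alpha}$ for all $r\in I$.
   Context: For a positive real $t$ and complex $\alpha$, $t^\alpha=e^{\alpha\ln t}$. *)

theory Defs
  imports "HOL-Analysis.Analysis"
begin

definition rpow_c :: "real \<Rightarrow> complex \<Rightarrow> complex" where
  "rpow_c t a = exp (a * of_real (ln t))"

end

theory Submission
  imports Defs "HOL-Analysis.Kronecker_Approximation_Theorem"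
begin

(*
  The "if" direction is explicit: the radial power map  w \<mapsto> w |w|^\<alpha>  is a
  homeomorphism of \<complex> for Re \<alpha> > -1 and turns multiplication by p into
  multiplication by p |p|^\<alpha>; composing with complex conjugation gives the
  second family.

  For the "only if" direction let f be such a homeomorphism.  Unless every
  p_r is 1, f fixes 0, so f \<circ> exp has a continuous logarithm F.  The set of
  "periods" t with F(z + t) = F z + \<Psi> t for all z is a closed additive subgroup
  of \<complex> on which \<Psi> is additive; it contains 2\<pi>i (with \<Psi>(2\<pi>i) = 2\<pi>i d,
  d = \<plusminus>1 the degree of f) and every Ln p_r (with q_r = exp (\<Psi> (Ln p_r))).
  Dirichlet's approximation theorem together with continuity of \<Psi> forces
  \<Psi> t = d i Im t + \<kappa> Re t on the periods, and the growth of f forces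
  Re \<kappa> > 0.  Then \<alpha> = \<kappa> - 1 works, with p_r or cnj p_r according to d.
*)

text \<open>A quantity whose integer multiples become small whenever the corresponding
  integer combinations of two reals x, x0 do must vanish: Dirichlet's theorem
  makes such combinations arbitrarily small with a nonzero multiplier.\<close>
lemma vanishes_if_multiples_small:
  fixes D :: complex and x x0 :: real
  assumes x0: "x0 > 0"
    and small: "\<And>e. e > 0 \<Longrightarrow> \<exists>\<delta>>0. \<forall>a b::int.
                  \<bar>of_int a * x - of_int b * x0\<bar> < \<delta> \<longrightarrow> norm (of_int a * D) < e"
  shows "D = 0"
proof (rule ccontr)
  assume D: "D \<noteq> 0"
  then obtain \<delta> where \<delta>: "\<delta> > 0"
    and \<delta>_small: "\<forall>a b::int. \<bar>of_int a * x - of_int b * x0\<bar> < \<delta> \<longrightarrow> norm (of_int a * D) < norm D"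
    using small[of "norm D"] by auto
  obtain N :: nat where N: "N > x0 / \<delta>" using reals_Archimedean2 by blast
  have N_pos: "N > 0" using N x0 \<delta>
    by (metis divide_pos_pos of_nat_0_less_iff order.strict_trans)
  obtain h k where k: "0 < k" "\<bar>of_int k * (x / x0) - of_int h\<bar> < 1 / N"
    using Dirichlet_approx[OF N_pos, of "x / x0"] by blast
  have "\<bar>of_int k * x - of_int h * x0\<bar> = x0 * \<bar>of_int k * (x / x0) - of_int h\<bar>"
    using x0 by (simp add: field_simps abs_mult[symmetric])
  also have "\<dots> < x0 * (1 / N)" using k x0 by (intro mult_strict_left_mono) auto
  also have "\<dots> < \<delta>" using N x0 \<delta> N_pos by (simp add: field_simps)
  finally have "norm (of_int k * D) < norm D" using \<delta>_small by blast
  moreover have "norm (of_int k * D) = \<bar>of_int k\<bar> * norm D" by (simp add: norm_mult)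
  moreover have "\<bar>real_of_int k\<bar> \<ge> 1" using k by linarith
  ultimately show False using mult_right_mono[of 1 "\<bar>real_of_int k\<bar>" "norm D"] by simp
qed

text \<open>A continuous function whose exponential is constant is itself constant,
  since its values lie in the discrete set of logarithms of that constant.\<close>
lemma continuous_exp_const_imp_const:
  fixes k :: "complex \<Rightarrow> complex"
  assumes cont: "continuous_on UNIV k" and exp_const: "\<And>z. exp (k z) = c"
  shows "k z = k 0"
proof -
  have "k constant_on UNIV"
  proof (rule continuous_discrete_range_constant[OF connected_UNIV cont])
    fix x :: complex
    show "\<exists>e>0. \<forall>y. y \<in> UNIV \<and> k y \<noteq> k x \<longrightarrow> e \<le> norm (k y - k x)"
    proof (intro exI[of _ "2 * pi"] conjI allI impI)
      fix y assume y: "y \<in> UNIV \<and> k y \<noteq> k x"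
      have "exp (k y) = exp (k x)" using exp_const by simp
      then obtain n :: int where n: "k y = k x + (of_int (2 * n) * pi) * \<i>" using exp_eq by blast
      with y have "n \<noteq> 0" by auto
      hence "\<bar>real_of_int n\<bar> \<ge> 1" by linarith
      moreover have "norm (k y - k x) = 2 * pi * \<bar>of_int n\<bar>" using n by (simp add: norm_mult)
      ultimately show "2 * pi \<le> norm (k y - k x)" by simp
    qed simp
  qed
  thus ?thesis unfolding constant_on_def by auto
qed

text \<open>A continuous self-map of the plane which vanishes only at 0 has a
  continuous logarithm along the exponential, because \<complex> is simply connected.\<close>
lemma continuous_log_along_exp:
  fixes f :: "complex \<Rightarrow> complex"
  assumes cont: "continuous_on UNIV f" and nonzero: "\<And>w. w \<noteq> 0 \<Longrightarrow> f w \<noteq> 0"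
  obtains F where "continuous_on UNIV F" "\<And>z. f (exp z) = exp (F z)"
proof -
  have "continuous_on UNIV (\<lambda>z. f (exp z))"
    by (rule continuous_on_compose2[OF cont continuous_on_exp[OF continuous_on_id]]) auto
  moreover have "simply_connected (UNIV :: complex set)"
    by (rule convex_imp_simply_connected) simp
  ultimately show ?thesis
    using continuous_logarithm_on_simply_connected[OF _ _ locally_path_connected_UNIV] nonzero that
    by (metis UNIV_I exp_not_eq_zero)
qed

section \<open>The radial power maps\<close>

text \<open>The map w \<mapsto> w |w|^a; it rescales the modulus to |w|^(1 + Re a) and
  rotates by the angle Im a \<cdot> ln |w|.\<close>
definition power_map :: "complex \<Rightarrow> complex \<Rightarrow> complex" where
  "power_map a w = w * rpow_c (norm w) a"

lemma norm_power_map: "norm (power_map a w) = norm w powr (1 + Re a)"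
proof (cases "w = 0")
  case False
  have "norm (power_map a w) = exp (ln (norm w)) * exp (Re a * ln (norm w))"
    using False by (simp add: power_map_def rpow_c_def norm_mult)
  also have "\<dots> = norm w powr (1 + Re a)"
    using False by (simp add: powr_def distrib_right exp_add)
  finally show ?thesis .
qed (simp add: power_map_def)

text \<open>Continuity at 0 needs the exponent of the modulus to be positive.\<close>
lemma continuous_power_map:
  assumes a: "Re a > -1"
  shows "continuous_on UNIV (power_map a)"
proof -
  have "isCont (power_map a) w" for w
  proof (cases "w = 0")
    case False
    hence "isCont (\<lambda>w. ln (norm w)) w"
      by (intro isCont_ln' continuous_norm continuous_ident) simp
    thus ?thesis unfolding power_map_def rpow_c_def
      by (intro continuous_mult continuous_ident continuous_exp continuous_of_real continuous_const)
  next
    case True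
    have "((\<lambda>w::complex. norm w powr (1 + Re a)) \<longlongrightarrow> 0) (at 0)"
      by (rule tendsto_zero_powrI[OF tendsto_norm_zero[OF tendsto_ident_at] tendsto_const])
         (use a in auto)
    hence "(power_map a \<longlongrightarrow> 0) (at 0)"
      by (rule Lim_null_comparison[rotated]) (simp add: norm_power_map)
    thus ?thesis using True by (simp add: isCont_def power_map_def)
  qed
  thus ?thesis by (simp add: continuous_at_imp_continuous_on)
qed

text \<open>The inverse of power_map a is power_map b with 1 + b = 1 / (1 + Re a) on
  the modulus: explicitly b = -a / (1 + Re a).\<close>
lemma power_map_inverse:
  assumes a: "Re a > -1" and b: "b = - a / of_real (1 + Re a)"
  shows "power_map b (power_map a w) = w"
proof (cases "w = 0")
  case False
  have nz: "complex_of_real (1 + Re a) \<noteq> 0" using a by (simp del: of_real_add)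
  have ln_norm: "ln (norm (power_map a w)) = (1 + Re a) * ln (norm w)"
    using False by (simp add: norm_power_map ln_powr)
  have "power_map b (power_map a w) = power_map a w * exp (b * of_real (ln (norm (power_map a w))))"
    by (simp only: power_map_def[of b] rpow_c_def)
  also have "\<dots> = w * exp (a * of_real (ln (norm w))) * exp (b * of_real ((1 + Re a) * ln (norm w)))"
    by (subst ln_norm) (simp only: power_map_def[of a] rpow_c_def)
  also have "b * of_real ((1 + Re a) * ln (norm w)) = - (a * of_real (ln (norm w)))"
    unfolding of_real_mult b using nz by (simp del: of_real_add)
  finally show ?thesis by (simp add: mult.assoc exp_minus exp_add[symmetric])
qed (simp add: power_map_def)

lemma power_map_homeomorphism:
  assumes a: "Re a > -1"
  shows "homeomorphism UNIV UNIV (power_map a) (power_map (- a / of_real (1 + Re a)))"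
proof -
  define b where "b = - a / of_real (1 + Re a)"
  have pos: "1 + Re a > 0" using a by simp
  have Re_b: "Re b = - Re a / (1 + Re a)" unfolding b_def by (simp add: Re_divide_of_real)
  have b: "Re b > -1" using pos a unfolding Re_b by (simp add: field_simps)
  have "1 + Re b = 1 / (1 + Re a)" unfolding Re_b using pos by (simp add: field_simps)
  hence a_from_b: "a = - b / of_real (1 + Re b)"
    unfolding b_def using pos by (simp del: of_real_add)
  show ?thesis unfolding b_def[symmetric]
    by (intro homeomorphismI continuous_power_map a b)
       (auto simp: power_map_inverse[OF a b_def] power_map_inverse[OF b a_from_b])
qed

lemma power_map_mult:
  assumes "p \<noteq> 0"
  shows "power_map a (p * w) = p * rpow_c (norm p) a * power_map a w"
proof (cases "w = 0")
  case False
  have "ln (norm (p * w)) = ln (norm p) + ln (norm w)"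
    using False assms by (simp add: norm_mult ln_mult)
  hence "rpow_c (norm (p * w)) a = rpow_c (norm p) a * rpow_c (norm w) a"
    unfolding rpow_c_def by (simp only: of_real_add distrib_left exp_add)
  thus ?thesis unfolding power_map_def by (simp only: mult_ac)
qed (simp add: power_map_def)

lemma conjugacy_from_power_map:
  assumes a: "Re a > -1" and p: "\<forall>r\<in>I. p r \<noteq> 0"
    and q: "\<forall>r\<in>I. q r = p r * rpow_c (norm (p r)) a"
  shows "\<exists>f :: complex \<Rightarrow> complex. (\<exists>g. homeomorphism UNIV UNIV f g) \<and>
           (\<forall>r\<in>I. \<forall>w. f (p r * w) = q r * f w)"
proof (intro exI conjI ballI allI)
  show "homeomorphism UNIV UNIV (power_map a) (power_map (- a / of_real (1 + Re a)))"
    by (rule power_map_homeomorphism[OF a])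
  show "power_map a (p r * w) = q r * power_map a w" if "r \<in> I" for r w
    using power_map_mult p q that by simp
qed

text \<open>For the conjugated family use cnj \<circ> power_map (cnj a).\<close>
lemma conjugacy_from_conj_power_map:
  assumes a: "Re a > -1" and p: "\<forall>r\<in>I. p r \<noteq> 0"
    and q: "\<forall>r\<in>I. q r = cnj (p r) * rpow_c (norm (p r)) a"
  shows "\<exists>f :: complex \<Rightarrow> complex. (\<exists>g. homeomorphism UNIV UNIV f g) \<and>
           (\<forall>r\<in>I. \<forall>w. f (p r * w) = q r * f w)"
proof -
  obtain g where g: "homeomorphism UNIV UNIV (power_map (cnj a)) g"
    using power_map_homeomorphism[of "cnj a"] a by auto
  have "homeomorphism UNIV UNIV cnj cnj" by (intro homeomorphismI continuous_intros) auto
  hence "homeomorphism UNIV UNIV (cnj \<circ> power_map (cnj a)) (g \<circ> cnj)"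
    by (rule homeomorphism_compose[OF g])
  moreover have "(cnj \<circ> power_map (cnj a)) (p r * w) = q r * (cnj \<circ> power_map (cnj a)) w"
    if "r \<in> I" for r w
    using p q that by (simp add: power_map_mult rpow_c_def exp_cnj)
  ultimately show ?thesis by blast
qed

section \<open>Additive periods of a continuous logarithm\<close>

locale additive_lift =
  fixes F :: "complex \<Rightarrow> complex"
  assumes cont_F: "continuous_on UNIV F"
begin

definition Psi :: "complex \<Rightarrow> complex" where "Psi t = F t - F 0"

definition periods :: "complex set" where
  "periods = {t. \<forall>z. F (z + t) = F z + Psi t}"

lemma periodsD: "t \<in> periods \<Longrightarrow> F (z + t) = F z + Psi t"
  by (simp add: periods_def)

lemma periods_zero: "0 \<in> periods" "Psi 0 = 0"
  by (auto simp: periods_def Psi_def)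

lemma periods_add:
  assumes s: "s \<in> periods" and t: "t \<in> periods"
  shows "s + t \<in> periods" "Psi (s + t) = Psi s + Psi t"
proof -
  show Psi_add: "Psi (s + t) = Psi s + Psi t" using periodsD[OF t, of s] by (simp add: Psi_def)
  show "s + t \<in> periods"
    unfolding periods_def using periodsD[OF s] periodsD[OF t] Psi_add
    by (simp add: add.assoc[symmetric])
qed

lemma periods_uminus:
  assumes t: "t \<in> periods"
  shows "- t \<in> periods" "Psi (- t) = - Psi t"
proof -
  have shift: "F (z + - t) = F z - Psi t" for z using periodsD[OF t, of "z - t"] by simp
  show Psi_neg: "Psi (- t) = - Psi t" using shift[of 0] by (simp add: Psi_def)
  show "- t \<in> periods" unfolding periods_def using shift Psi_neg by simp
qed

lemma periods_of_nat:
  assumes t: "t \<in> periods"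
  shows "of_nat n * t \<in> periods \<and> Psi (of_nat n * t) = of_nat n * Psi t"
proof (induction n)
  case (Suc n)
  then show ?case using periods_add[OF _ t, of "of_nat n * t"] by (simp add: distrib_right add.commute)
qed (simp add: periods_zero)

lemma periods_of_int:
  assumes t: "t \<in> periods"
  shows "of_int n * t \<in> periods" "Psi (of_int n * t) = of_int n * Psi t"
proof -
  have "of_int n * t \<in> periods \<and> Psi (of_int n * t) = of_int n * Psi t"
  proof (cases "n \<ge> 0")
    case True
    then obtain m where "n = int m" by (metis nonneg_eq_int)
    then show ?thesis using periods_of_nat[OF t, of m] by simp
  next
    case False
    define m where "m = nat (- n)"
    have "n = - int m" using False by (simp add: m_def)
    then show ?thesis using periods_of_nat[OF t, of m] periods_uminus[of "of_nat m * t"] by simp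
  qed
  thus "of_int n * t \<in> periods" "Psi (of_int n * t) = of_int n * Psi t" by auto
qed

lemma periods_int_comb:
  assumes "s \<in> periods" "t \<in> periods"
  shows "of_int a * s - of_int b * t \<in> periods"
    "Psi (of_int a * s - of_int b * t) = of_int a * Psi s - of_int b * Psi t"
  using periods_add[OF periods_of_int(1)[OF assms(1), of a] periods_of_int(1)[OF assms(2), of "-b"]]
    periods_of_int(2)[OF assms(1), of a] periods_of_int(2)[OF assms(2), of "-b"] by auto

lemma continuous_Psi: "continuous_on UNIV Psi"
  unfolding Psi_def by (intro continuous_intros cont_F)

lemma closed_periods: "closed periods"
proof -
  have "periods = (\<Inter>z. {t. F (z + t) = F z + Psi t})" by (auto simp: periods_def)
  moreover have "closed {t. F (z + t) = F z + Psi t}" for z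
    by (intro closed_Collect_eq continuous_intros continuous_Psi
          continuous_on_compose2[OF cont_F]) auto
  ultimately show ?thesis by auto
qed

lemma period_if_exp_shift:
  assumes "\<And>z. exp (F (z + t)) = c * exp (F z)"
  shows "t \<in> periods"
proof -
  have c: "exp (F (z + t) - F z) = c" for z using assms[of z] by (simp add: exp_diff)
  have "F (z + t) - F z = F (0 + t) - F 0" for z
    by (rule continuous_exp_const_imp_const[where k = "\<lambda>z. F (z + t) - F z", OF _ c])
       (intro continuous_intros cont_F continuous_on_compose2[OF cont_F]; auto)
  thus ?thesis by (auto simp: periods_def Psi_def algebra_simps)
qed

end

section \<open>Linearity of \<Psi> on the periods\<close>

locale degree_lift = additive_lift +
  fixes d :: int
  assumes two_pi_i_period: "2 * pi * \<i> \<in> periods"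
    and Psi_two_pi_i: "Psi (2 * pi * \<i>) = of_int d * (2 * pi * \<i>)"
begin

text \<open>On imaginary periods t, the combinations a t - 2\<pi>i b are again periods
  and come arbitrarily close to 0, so continuity of \<Psi> gives \<Psi> t = d t.\<close>
lemma Psi_imaginary_period:
  assumes t: "t \<in> periods" "Re t = 0"
  shows "Psi t = of_int d * t"
proof -
  have t_eq: "t = \<i> * of_real (Im t)" using t(2) by (simp add: complex_eq_iff)
  have "Psi t - of_int d * t = 0"
  proof (rule vanishes_if_multiples_small[where x = "Im t" and x0 = "2 * pi"])
    fix e :: real assume e: "e > 0"
    define \<phi> where "\<phi> s = Psi s - of_int d * s" for s
    have "continuous_on UNIV \<phi>" unfolding \<phi>_def by (intro continuous_intros continuous_Psi)
    then obtain \<delta> where \<delta>: "\<delta> > 0" "\<forall>s. dist s 0 < \<delta> \<longrightarrow> dist (\<phi> s) (\<phi> 0) < e"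
      using e unfolding continuous_on_iff by blast
    moreover have "\<phi> 0 = 0" using periods_zero by (simp add: \<phi>_def)
    ultimately have \<phi>_small: "norm (\<phi> s) < e" if "norm s < \<delta>" for s
      using that by (simp add: dist_norm)
    show "\<exists>\<delta>>0. \<forall>a b::int. \<bar>of_int a * Im t - of_int b * (2 * pi)\<bar> < \<delta> \<longrightarrow>
            norm (of_int a * (Psi t - of_int d * t)) < e"
    proof (intro exI[of _ \<delta>] conjI allI impI \<delta>(1))
      fix a b :: int assume ab: "\<bar>of_int a * Im t - of_int b * (2 * pi)\<bar> < \<delta>"
      define s where "s = of_int a * t - of_int b * (2 * pi * \<i>)"
      have "Psi s = of_int a * Psi t - of_int b * Psi (2 * pi * \<i>)"
        unfolding s_def by (rule periods_int_comb(2)[OF t(1) two_pi_i_period])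
      hence "\<phi> s = of_int a * (Psi t - of_int d * t)"
        unfolding \<phi>_def s_def Psi_two_pi_i by (simp add: algebra_simps)
      moreover have "norm s = \<bar>of_int a * Im t - of_int b * (2 * pi)\<bar>"
      proof -
        define X where "X = of_int a * Im t - of_int b * (2 * pi)"
        have "s = \<i> * of_real X" unfolding s_def X_def by (subst t_eq) (simp add: algebra_simps)
        hence "norm s = \<bar>X\<bar>" by (simp add: norm_mult)
        thus ?thesis by (simp add: X_def)
      qed
      ultimately show "norm (of_int a * (Psi t - of_int d * t)) < e" using \<phi>_small ab by metis
    qed
  qed simp
  thus ?thesis by simp
qed

text \<open>The deviation \<Phi> of \<Psi> from the candidate linear map is small on all
  periods with small real part.  \<Phi> is 2\<pi>i-periodic on periods, vanishes on
  imaginary ones, and on the compact set of periods in the strip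
  |Re s| \<le> 1, 0 \<le> Im s \<le> 2\<pi> where |\<Phi>| \<ge> e the real part stays away from 0.\<close>
lemma Psi_deviation_small:
  fixes \<kappa> :: complex and e :: real
  assumes e: "e > 0"
  defines "\<Phi> \<equiv> \<lambda>s. Psi s - of_int d * \<i> * of_real (Im s) - \<kappa> * of_real (Re s)"
  shows "\<exists>\<delta>>0. \<forall>s\<in>periods. \<bar>Re s\<bar> < \<delta> \<longrightarrow> norm (\<Phi> s) < e"
proof -
  have cont_\<Phi>: "continuous_on UNIV \<Phi>" unfolding \<Phi>_def
    by (intro continuous_intros continuous_Psi)
  have \<Phi>_imaginary: "\<Phi> s = 0" if "s \<in> periods" "Re s = 0" for s
  proof -
    have "s = \<i> * of_real (Im s)" using that(2) by (simp add: complex_eq_iff)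
    thus ?thesis unfolding \<Phi>_def using that Psi_imaginary_period
      by (metis add.right_neutral diff_self mult.assoc mult_zero_right of_real_0)
  qed
  have \<Phi>_periodic: "\<Phi> (of_int 1 * s - of_int k * (2 * pi * \<i>)) = \<Phi> s" if "s \<in> periods" for s k
    using periods_int_comb(2)[OF that two_pi_i_period, of 1 k]
    unfolding \<Phi>_def Psi_two_pi_i by (simp add: algebra_simps)
  define K where "K = periods \<inter> {s. \<bar>Re s\<bar> \<le> 1 \<and> 0 \<le> Im s \<and> Im s \<le> 2 * pi \<and> e \<le> norm (\<Phi> s)}"
  have "closed {s. \<bar>Re s\<bar> \<le> 1 \<and> 0 \<le> Im s \<and> Im s \<le> 2 * pi \<and> e \<le> norm (\<Phi> s)}"
    by (intro closed_Collect_conj closed_Collect_le continuous_intros cont_\<Phi>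
          continuous_on_compose2[OF cont_\<Phi>]) auto
  hence closed_K: "closed K" unfolding K_def using closed_periods by auto
  have "K \<subseteq> cball 0 (1 + 2 * pi)"
  proof
    fix s assume "s \<in> K"
    hence "\<bar>Re s\<bar> \<le> 1" "\<bar>Im s\<bar> \<le> 2 * pi" unfolding K_def by auto
    hence "norm s \<le> 1 + 2 * pi" using cmod_le[of s] by linarith
    thus "s \<in> cball 0 (1 + 2 * pi)" by simp
  qed
  hence compact_K: "compact K"
    using closed_K compact_eq_bounded_closed bounded_cball bounded_subset by blast
  obtain \<delta> where \<delta>: "\<delta> > 0" "\<delta> \<le> 1" and \<delta>_K: "\<And>s. s \<in> K \<Longrightarrow> \<delta> \<le> \<bar>Re s\<bar>"
  proof (cases "K = {}")
    case False
    have "continuous_on K (\<lambda>s. \<bar>Re s\<bar>)" by (intro continuous_intros)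
    then obtain s0 where s0: "s0 \<in> K" "\<And>s. s \<in> K \<Longrightarrow> \<bar>Re s0\<bar> \<le> \<bar>Re s\<bar>"
      using continuous_attains_inf[OF compact_K False] by blast
    have "Re s0 \<noteq> 0" using \<Phi>_imaginary s0(1) e by (auto simp: K_def)
    thus ?thesis using that[of "min 1 \<bar>Re s0\<bar>"] s0 by fastforce
  qed (use that[of 1] in auto)
  show ?thesis
  proof (intro exI[of _ \<delta>] conjI ballI impI \<delta>(1))
    fix s assume s: "s \<in> periods" "\<bar>Re s\<bar> < \<delta>"
    define k where "k = \<lfloor>Im s / (2 * pi)\<rfloor>"
    define s' where "s' = of_int 1 * s - of_int k * (2 * pi * \<i>)"
    have "s' \<in> periods" unfolding s'_def by (rule periods_int_comb(1)[OF s(1) two_pi_i_period])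
    moreover have "of_int k \<le> Im s / (2 * pi)" "Im s / (2 * pi) < of_int k + 1"
      unfolding k_def by linarith+
    hence "0 \<le> Im s'" "Im s' \<le> 2 * pi" unfolding s'_def by (simp_all add: field_simps)
    moreover have "Re s' = Re s" unfolding s'_def by simp
    moreover have "\<Phi> s' = \<Phi> s" unfolding s'_def by (rule \<Phi>_periodic[OF s(1)])
    ultimately have "s' \<in> K" if "\<not> norm (\<Phi> s) < e"
      using that s(2) \<delta>(2) unfolding K_def by auto
    thus "norm (\<Phi> s) < e" using \<delta>_K \<open>Re s' = Re s\<close> s(2) by force
  qed
qed

text \<open>Given a period t0 with Re t0 > 0, choosing \<kappa> so that \<Phi> t0 = 0, the
  combinations a t - b t0 show, via the previous lemma, that \<Phi> vanishes on all
  periods: \<Psi> is real-linear on the periods.\<close>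
lemma Psi_linear_on_periods:
  assumes t0: "t0 \<in> periods" "Re t0 > 0"
  defines "\<kappa> \<equiv> (Psi t0 - of_int d * \<i> * of_real (Im t0)) / of_real (Re t0)"
  shows "\<forall>t\<in>periods. Psi t = of_int d * \<i> * of_real (Im t) + \<kappa> * of_real (Re t)"
proof
  fix t assume t: "t \<in> periods"
  define \<Phi> where "\<Phi> s = Psi s - of_int d * \<i> * of_real (Im s) - \<kappa> * of_real (Re s)" for s
  have \<Phi>_t0: "\<Phi> t0 = 0" using t0(2) unfolding \<Phi>_def \<kappa>_def by (simp add: field_simps)
  have "\<Phi> t = 0"
  proof (rule vanishes_if_multiples_small[where x = "Re t" and x0 = "Re t0"])
    fix e :: real assume e: "e > 0"
    obtain \<delta> where \<delta>: "\<delta> > 0" "\<And>s. s \<in> periods \<Longrightarrow> \<bar>Re s\<bar> < \<delta> \<Longrightarrow> norm (\<Phi> s) < e"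
      using Psi_deviation_small[OF e, of \<kappa>] unfolding \<Phi>_def by blast
    show "\<exists>\<delta>>0. \<forall>a b::int. \<bar>of_int a * Re t - of_int b * Re t0\<bar> < \<delta> \<longrightarrow>
            norm (of_int a * \<Phi> t) < e"
    proof (intro exI[of _ \<delta>] conjI allI impI \<delta>(1))
      fix a b :: int assume ab: "\<bar>of_int a * Re t - of_int b * Re t0\<bar> < \<delta>"
      define s where "s = of_int a * t - of_int b * t0"
      have "s \<in> periods" unfolding s_def by (rule periods_int_comb(1)[OF t t0(1)])
      moreover have "Psi s = of_int a * Psi t - of_int b * Psi t0"
        unfolding s_def by (rule periods_int_comb(2)[OF t t0(1)])
      hence "\<Phi> s = of_int a * \<Phi> t"
        using \<Phi>_t0 unfolding \<Phi>_def s_def by (simp add: algebra_simps)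
      moreover have "Re s = of_int a * Re t - of_int b * Re t0" unfolding s_def by simp
      ultimately show "norm (of_int a * \<Phi> t) < e" using \<delta> ab by metis
    qed
  qed (use t0 in simp)
  thus "Psi t = of_int d * \<i> * of_real (Im t) + \<kappa> * of_real (Re t)"
    unfolding \<Phi>_def by (simp add: algebra_simps)
qed

text \<open>If moreover \<Psi> maps periods in the right half plane to the right half
  plane, the coefficient \<kappa> can be chosen with positive real part (if all
  periods are imaginary, any \<kappa> works).\<close>
lemma Psi_linear_positive:
  assumes pos: "\<And>t. t \<in> periods \<Longrightarrow> Re t > 0 \<Longrightarrow> Re (Psi t) > 0"
  obtains \<kappa> where "Re \<kappa> > 0"
    "\<forall>t\<in>periods. Psi t = of_int d * \<i> * of_real (Im t) + \<kappa> * of_real (Re t)"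
proof (cases "\<exists>t0\<in>periods. Re t0 > 0")
  case True
  then obtain t0 where t0: "t0 \<in> periods" "Re t0 > 0" by blast
  define \<kappa> where "\<kappa> = (Psi t0 - of_int d * \<i> * of_real (Im t0)) / of_real (Re t0)"
  have lin: "\<forall>t\<in>periods. Psi t = of_int d * \<i> * of_real (Im t) + \<kappa> * of_real (Re t)"
    using Psi_linear_on_periods[OF t0] unfolding \<kappa>_def by blast
  hence "Re (Psi t0) = Re \<kappa> * Re t0" using t0(1) by simp
  hence "Re \<kappa> > 0" using pos[OF t0] t0(2) by (metis zero_less_mult_pos2)
  thus ?thesis using that lin by blast
next
  case False
  have "Psi t = of_int d * \<i> * of_real (Im t) + 1 * of_real (Re t)" if t: "t \<in> periods" for t
  proof -
    have "Re t = 0"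
    proof (rule ccontr)
      assume "Re t \<noteq> 0"
      then consider "Re t > 0" | "Re (- t) > 0" by fastforce
      thus False using False t periods_uminus(1)[OF t] by cases blast+
    qed
    moreover have "t = \<i> * of_real (Im t)" using \<open>Re t = 0\<close> by (simp add: complex_eq_iff)
    ultimately show ?thesis using Psi_imaginary_period[OF t]
      by (metis add.right_neutral mult.assoc mult_zero_right of_real_0)
  qed
  thus ?thesis using that[of 1] by simp
qed

end

section \<open>The logarithm of an equivariant homeomorphism\<close>

text \<open>If some p_r differs from 1, the conjugating homeomorphism fixes 0:
  f 0 is fixed by multiplication with q_r, and q_r = 1 would force p_r = 1.\<close>
lemma equivariant_homeomorphism_fixes_zero:
  fixes f g :: "complex \<Rightarrow> complex" and p q :: complex
  assumes hom: "homeomorphism UNIV UNIV f g"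
    and eq: "\<And>w. f (p * w) = q * f w" and p: "p \<noteq> 1"
  shows "f 0 = 0"
proof (rule ccontr)
  assume nz: "f 0 \<noteq> 0"
  have "f 0 = q * f 0" using eq[of 0] by (metis mult_zero_right)
  hence "q = 1" using nz by simp
  hence "f p = f 1" using eq[of 1] by simp
  hence "p = 1" using hom unfolding homeomorphism_def by (metis UNIV_I)
  with p show False by simp
qed

context additive_lift
begin

lemma multiplier_period:
  assumes lift: "\<And>z. f (exp z) = exp (F z)"
    and eq: "\<And>w. f (p * w) = q * f w" and p: "p \<noteq> 0"
  shows "Ln p \<in> periods" "q = exp (Psi (Ln p))"
proof -
  have exp_shift: "exp (F (z + Ln p)) = q * exp (F z)" for z
    using eq[of "exp z"] p by (simp add: lift[symmetric] exp_add mult.commute)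
  thus "Ln p \<in> periods" by (rule period_if_exp_shift)
  show "q = exp (Psi (Ln p))" using exp_shift[of 0] by (simp add: Psi_def exp_diff)
qed

text \<open>Since exp is 2\<pi>i-periodic, 2\<pi>i is a period with increment in 2\<pi>i \<int>.\<close>
lemma two_pi_i_period:
  assumes lift: "\<And>z. f (exp z) = exp (F z)"
  obtains n :: int where "2 * pi * \<i> \<in> periods" "Psi (2 * pi * \<i>) = of_int n * (2 * pi * \<i>)"
proof -
  have "2 * pi * \<i> \<in> periods"
    by (rule period_if_exp_shift[where c = 1]) (simp add: lift[symmetric] exp_add)
  moreover have "exp (F (2 * pi * \<i>)) = exp (F 0)"
    using lift[of "2 * pi * \<i>"] lift[of 0] by simp
  then obtain n :: int where "F (2 * pi * \<i>) = F 0 + (of_int (2 * n) * pi) * \<i>"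
    using exp_eq by blast
  ultimately show ?thesis using that[of n] by (simp add: Psi_def)
qed

text \<open>The degree of a homeomorphism is \<plusminus>1: lifting the inverse g by G, the
  map F \<circ> G - id is constant, so F \<circ> G increases by 2\<pi>i along 2\<pi>i, while
  G increases by 2\<pi>i m and then F by 2\<pi>i m n.\<close>
lemma homeomorphism_degree:
  assumes lift: "\<And>z. f (exp z) = exp (F z)"
    and lift_inv: "\<And>z. g (exp z) = exp (G z)" and cont_G: "continuous_on UNIV G"
    and fg: "\<And>y. f (g y) = y"
    and Psi_n: "Psi (2 * pi * \<i>) = of_int n * (2 * pi * \<i>)" and per: "2 * pi * \<i> \<in> periods"
  shows "n = 1 \<or> n = -1"
proof -
  have "exp (G (2 * pi * \<i>)) = exp (G 0)"
    using lift_inv[of "2 * pi * \<i>"] lift_inv[of 0] by simp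
  then obtain m :: int where m: "G (2 * pi * \<i>) = G 0 + of_int m * (2 * pi * \<i>)"
    using exp_eq by (auto simp: algebra_simps)
  have "exp (F (G z) - z) = 1" for z
    using lift[of "G z"] lift_inv[of z] fg[of "exp z"] by (simp add: exp_diff)
  moreover have "continuous_on UNIV (\<lambda>z. F (G z) - z)"
    by (intro continuous_intros continuous_on_compose2[OF cont_F cont_G]) auto
  ultimately have FG: "F (G z) - z = F (G 0) - 0" for z
    using continuous_exp_const_imp_const[where k = "\<lambda>z. F (G z) - z" and c = 1] by blast
  have "F (G (2 * pi * \<i>)) = F (G 0) + Psi (of_int m * (2 * pi * \<i>))"
    unfolding m by (rule periodsD[OF periods_of_int(1)[OF per]])
  also have "Psi (of_int m * (2 * pi * \<i>)) = of_int m * (of_int n * (2 * pi * \<i>))"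
    using periods_of_int(2)[OF per] Psi_n by simp
  finally have "F (G (2 * pi * \<i>)) = F (G 0) + of_int m * (of_int n * (2 * pi * \<i>))" .
  moreover have "F (G (2 * pi * \<i>)) = F (G 0) + 2 * pi * \<i>" using FG[of "2 * pi * \<i>"]
    by (simp add: diff_eq_eq)
  ultimately have "of_int (m * n) * (2 * pi * \<i>) = 1 * (2 * pi * \<i>)" by (simp add: algebra_simps)
  hence "m * n = 1" by (metis mult_cancel_right of_int_1 of_int_eq_iff pi_neq_zero
      complex_i_not_zero mult_eq_0_iff of_real_eq_0_iff zero_neq_numeral of_real_numeral)
  thus ?thesis by (auto simp: zmult_eq_1_iff)
qed

text \<open>Growth: for a period t with Re t > 0, Re (\<Psi> t) \<le> 0 would keep
  f (exp (N t)) in a fixed disc while exp (N t) \<rightarrow> \<infinity>, contradicting the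
  boundedness of g on that disc.\<close>
lemma Psi_positive:
  assumes lift: "\<And>z. f (exp z) = exp (F z)"
    and cont_g: "continuous_on UNIV g" and gf: "\<And>x. g (f x) = x"
    and t: "t \<in> periods" "Re t > 0"
  shows "Re (Psi t) > 0"
proof (rule ccontr)
  assume "\<not> Re (Psi t) > 0"
  hence nonpos: "Re (Psi t) \<le> 0" by simp
  define M where "M = norm (exp (F 0))"
  have "compact (g ` cball 0 M)"
    by (rule compact_continuous_image[OF continuous_on_subset[OF cont_g]]) auto
  then obtain B where B: "\<And>x. x \<in> g ` cball 0 M \<Longrightarrow> norm x \<le> B"
    using compact_imp_bounded bounded_iff by metis
  have bounded: "exp (real N * Re t) \<le> B" for N :: nat
  proof -
    have "F (of_nat N * t) = F 0 + of_nat N * Psi t"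
      using periods_of_nat[OF t(1), of N] periodsD[of _ 0] by auto
    hence "norm (f (exp (of_nat N * t))) = M * exp (real N * Re (Psi t))"
      unfolding lift M_def by (simp add: exp_add norm_mult)
    also have "\<dots> \<le> M" unfolding M_def
      using nonpos mult_left_mono[of "exp (real N * Re (Psi t))" 1] by (simp add: mult_nonneg_nonpos)
    finally have "g (f (exp (of_nat N * t))) \<in> g ` cball 0 M" by simp
    thus ?thesis using B gf by fastforce
  qed
  obtain N :: nat where N: "real N > B / Re t" using reals_Archimedean2 by blast
  have "1 + real N * Re t \<le> exp (real N * Re t)" by (rule exp_ge_add_one_self)
  moreover have "real N * Re t > B" using N t(2) by (simp add: field_simps)
  ultimately show False using bounded[of N] by linarith
qed

end

text \<open>Translating the linear form of \<Psi> back: with \<alpha> = \<kappa> - 1,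
  exp (\<plusminus>i Im (Ln p) + \<kappa> Re (Ln p)) is p |p|^\<alpha> resp. cnj p |p|^\<alpha>.\<close>
lemma exp_linear_Ln:
  assumes p: "p \<noteq> 0"
  shows "exp (\<i> * of_real (Im (Ln p)) + \<kappa> * of_real (Re (Ln p))) = p * rpow_c (norm p) (\<kappa> - 1)"
    and "exp (- \<i> * of_real (Im (Ln p)) + \<kappa> * of_real (Re (Ln p))) = cnj p * rpow_c (norm p) (\<kappa> - 1)"
proof -
  have split: "exp (X + (\<kappa> - 1) * of_real (Re (Ln p))) = exp X * rpow_c (norm p) (\<kappa> - 1)" for X
    unfolding rpow_c_def using p by (simp add: Re_Ln exp_add)
  have "\<i> * of_real (Im (Ln p)) + \<kappa> * of_real (Re (Ln p)) = Ln p + (\<kappa> - 1) * of_real (Re (Ln p))"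
    by (simp add: complex_eq_iff algebra_simps)
  thus "exp (\<i> * of_real (Im (Ln p)) + \<kappa> * of_real (Re (Ln p))) = p * rpow_c (norm p) (\<kappa> - 1)"
    using split p by simp
  have "- \<i> * of_real (Im (Ln p)) + \<kappa> * of_real (Re (Ln p)) = cnj (Ln p) + (\<kappa> - 1) * of_real (Re (Ln p))"
    by (simp add: complex_eq_iff algebra_simps)
  thus "exp (- \<i> * of_real (Im (Ln p)) + \<kappa> * of_real (Re (Ln p))) = cnj p * rpow_c (norm p) (\<kappa> - 1)"
    using split[of "cnj (Ln p)"] p by (simp flip: exp_cnj)
qed

lemma exponent_from_conjugacy:
  fixes f g :: "complex \<Rightarrow> complex"
  assumes hom: "homeomorphism UNIV UNIV f g"
    and eq: "\<forall>r\<in>I. \<forall>w. f (p r * w) = q r * f w"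
    and p: "\<forall>r\<in>I. p r \<noteq> 0"
  shows "\<exists>\<alpha>::complex. Re \<alpha> > -1 \<and> ((\<forall>r\<in>I. q r = p r * rpow_c (norm (p r)) \<alpha>) \<or>
             (\<forall>r\<in>I. q r = cnj (p r) * rpow_c (norm (p r)) \<alpha>))"
proof (cases "\<forall>r\<in>I. p r = 1")
  case True
  have "q r = 1" if "r \<in> I" for r
    using eq that True hom unfolding homeomorphism_def by (metis UNIV_I mult_1 mult_cancel_right1)
  thus ?thesis using True by (intro exI[of _ 0]) (simp add: rpow_c_def)
next
  case False
  have gf: "\<And>x. g (f x) = x" and fg: "\<And>y. f (g y) = y"
    and cont_f: "continuous_on UNIV f" and cont_g: "continuous_on UNIV g"
    using hom unfolding homeomorphism_def by auto
  have "f 0 = 0"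
    using False eq equivariant_homeomorphism_fixes_zero[OF hom] by blast
  hence "g 0 = 0" using gf[of 0] by simp
  have "f w \<noteq> 0" "g w \<noteq> 0" if "w \<noteq> 0" for w
    using that gf fg \<open>f 0 = 0\<close> \<open>g 0 = 0\<close> by metis+
  then obtain F G where cont_F: "continuous_on UNIV F" and lift: "\<And>z. f (exp z) = exp (F z)"
    and cont_G: "continuous_on UNIV G" and lift_inv: "\<And>z. g (exp z) = exp (G z)"
    using continuous_log_along_exp[OF cont_f] continuous_log_along_exp[OF cont_g] by metis
  interpret additive_lift F by unfold_locales (rule cont_F)
  obtain n where per: "2 * pi * \<i> \<in> periods" and Psi_n: "Psi (2 * pi * \<i>) = of_int n * (2 * pi * \<i>)"
    using two_pi_i_period[OF lift] by blast
  have n: "n = 1 \<or> n = -1" by (rule homeomorphism_degree[OF lift lift_inv cont_G fg Psi_n per])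
  interpret degree_lift F n by unfold_locales (rule per, rule Psi_n)
  obtain \<kappa> where \<kappa>: "Re \<kappa> > 0"
    and lin: "\<forall>t\<in>periods. Psi t = of_int n * \<i> * of_real (Im t) + \<kappa> * of_real (Re t)"
    using Psi_linear_positive Psi_positive[OF lift cont_g gf] by blast
  have q: "q r = exp (of_int n * \<i> * of_real (Im (Ln (p r))) + \<kappa> * of_real (Re (Ln (p r))))"
    if "r \<in> I" for r
    using multiplier_period[OF lift, of "p r" "q r"] eq p lin that by auto
  show ?thesis
    using n \<kappa> q exp_linear_Ln[of "p _" \<kappa>] p by (intro exI[of _ "\<kappa> - 1"]) auto
qed

theorem theorem3p1:
  fixes I :: "'i set" and p q :: "'i \<Rightarrow> complex"
  assumes "\<And>r. r \<in> I \<Longrightarrow> p r \<noteq> 0"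
      and "\<And>r. r \<in> I \<Longrightarrow> q r \<noteq> 0"
  shows "(\<exists>f :: complex \<Rightarrow> complex. (\<exists>g. homeomorphism UNIV UNIV f g) \<and>
            (\<forall>r\<in>I. \<forall>w. f (p r * w) = q r * f w))
     \<longleftrightarrow> (\<exists>\<alpha> :: complex. Re \<alpha> > -1 \<and>
            ((\<forall>r\<in>I. q r = p r * rpow_c (norm (p r)) \<alpha>) \<or>
             (\<forall>r\<in>I. q r = cnj (p r) * rpow_c (norm (p r)) \<alpha>)))"
  using exponent_from_conjugacy[of _ _ I p q] conjugacy_from_power_map[of _ I p q]
    conjugacy_from_conj_power_map[of _ I p q] assms(1)
  by blast

end
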